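(* Assume the Eliahou–Kryuchkov conjecture: for any two plane trees all of whose internal vertices are trivalent and which have the same number of twigs, there exist assignments of signs $\pm$ to the internal vertices of the two trees such that one signed tree can be transformed into the other by a finite sequence of signed reassociation moves. Then for any two bracketings $L$ and $R$ of the product of the same ordered sequence of $n$ variables $x_1,\dots,x_n$, there exists an assignment of values from $\{i,j,k\}$ to the variables such that $L=R$ in the vector cross product algebra (with both sides nonzero), together with a sequence of algebraic reassociations $(ab)c\leftrightarrow a(bc)$ applied to subexpressions taking $L$ to $R$ such that every intermediate bracketed product in the sequence is non-zero when evaluated as a vector cross product.
   Context: The vector cross product algebra is the algebra on $\mathbb{R}^3$ with basis $i,j,k$ and product the cross product: $ij=k$, $jk=i$, $ki=j$, $ji=-k$, $kj=-i$, $ik=-j$, $ii=jj=kk=0$. A bracketed product of $n$ ordered variables corresponds to a rooted binary plane tree with $n$ leaves (each trivalent vertex is a product of its two incoming edge labels). A twig is an edge incident to an end vertex of a tree. A reassociation move replaces a configuration of two adjacent trivalent vertices corresponding to $(ab)c$ by the one corresponding to $a(bc)$, or conversely. A signed reassociation move is allowed only when the two adjacent vertices involved carry the same sign, and after the move both vertices receive the opposite sign. *)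

theory Defs
  imports "HOL-Analysis.Analysis"
begin

text \<open>A bracketed product is a rooted binary plane tree; leaves carry the
  variable (index) sitting there.\<close>
datatype 'a btree = Lf 'a | Nd "'a btree" "'a btree"

fun fringe :: "'a btree \<Rightarrow> 'a list" where
  "fringe (Lf x) = [x]"
| "fringe (Nd a b) = fringe a @ fringe b"

inductive reassoc :: "'a btree \<Rightarrow> 'a btree \<Rightarrow> bool" where
  assoc_lr: "reassoc (Nd (Nd a b) c) (Nd a (Nd b c))"
| assoc_rl: "reassoc (Nd a (Nd b c)) (Nd (Nd a b) c)"
| congL: "reassoc a a' \<Longrightarrow> reassoc (Nd a b) (Nd a' b)"
| congR: "reassoc b b' \<Longrightarrow> reassoc (Nd a b) (Nd a b')"

text \<open>Rooted binary plane trees whose internal (trivalent) vertices carry a sign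
  (True = +, False = -).\<close>
datatype stree = SLf | SNd bool stree stree

fun shape :: "stree \<Rightarrow> unit btree" where
  "shape SLf = Lf ()"
| "shape (SNd s a b) = Nd (shape a) (shape b)"

inductive sreassoc :: "stree \<Rightarrow> stree \<Rightarrow> bool" where
  s_lr: "sreassoc (SNd s (SNd s a b) c) (SNd (\<not> s) a (SNd (\<not> s) b c))"
| s_rl: "sreassoc (SNd s a (SNd s b c)) (SNd (\<not> s) (SNd (\<not> s) a b) c)"
| s_congL: "sreassoc a a' \<Longrightarrow> sreassoc (SNd s a b) (SNd s a' b)"
| s_congR: "sreassoc b b' \<Longrightarrow> sreassoc (SNd s a b) (SNd s a b')"

text \<open>Eliahou--Kryuchkov conjecture (rooted form: two binary plane trees with the
  same number of twigs, i.e. the same number of leaves).\<close>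
definition EK_conjecture :: bool where
  "EK_conjecture \<longleftrightarrow>
     (\<forall>T1 T2 :: unit btree. length (fringe T1) = length (fringe T2) \<longrightarrow>
        (\<exists>S1 S2. shape S1 = T1 \<and> shape S2 = T2 \<and> sreassoc\<^sup>*\<^sup>* S1 S2))"

definition vi :: "real^3" where "vi = vector [1, 0, 0]"
definition vj :: "real^3" where "vj = vector [0, 1, 0]"
definition vk :: "real^3" where "vk = vector [0, 0, 1]"

fun eval_cp :: "('a \<Rightarrow> real^3) \<Rightarrow> 'a btree \<Rightarrow> real^3" where
  "eval_cp v (Lf x) = v x"
| "eval_cp v (Nd a b) = cross3 (eval_cp v a) (eval_cp v b)"

end

theory Submission
  imports Defs
begin

text \<open>Colour the vertices of a signed tree by the axes i, j, k: the root gets some axis X, and a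
  vertex of colour X passes the colours (next X, next (next X)) to its two children if its sign
  is + and the reversed pair if it is -, where next is the cyclic shift i \<mapsto> j \<mapsto> k \<mapsto> i.
  Since next X \<times> next (next X) = X, assigning to each leaf the basis vector of its colour makes
  every subexpression evaluate to \<plusminus>(its colour), the sign being the parity of the number of
  - vertices below it; in particular no subexpression vanishes. A signed reassociation move
  changes neither the colours of the leaves nor that parity, so under the Eliahou--Kryuchkov
  conjecture one assignment works simultaneously for every tree of a signed move sequence
  from L to R.\<close>

datatype axis = AxI | AxJ | AxK

fun next_axis :: "axis \<Rightarrow> axis" where
  "next_axis AxI = AxJ"
| "next_axis AxJ = AxK"
| "next_axis AxK = AxI"

fun axis_vec :: "axis \<Rightarrow> real^3" where
  "axis_vec AxI = vi"
| "axis_vec AxJ = vj"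
| "axis_vec AxK = vk"

lemma next_axis_next_axis_next_axis [simp]: "next_axis (next_axis (next_axis X)) = X"
  by (cases X) simp_all

lemma axis_vec_nonzero: "axis_vec X \<noteq> 0"
  by (cases X) (simp_all add: vec_eq_iff forall_3 vi_def vj_def vk_def vector_def)

lemma cross3_next_axis:
  "cross3 (axis_vec (next_axis X)) (axis_vec (next_axis (next_axis X))) = axis_vec X"
  "cross3 (axis_vec (next_axis (next_axis X))) (axis_vec (next_axis X)) = - axis_vec X"
  by (cases X; simp add: cross3_simps vi_def vj_def vk_def)+

fun num_leaves :: "stree \<Rightarrow> nat" where
  "num_leaves SLf = 1"
| "num_leaves (SNd s a b) = num_leaves a + num_leaves b"

lemma num_leaves_eq_length_fringe: "num_leaves S = length (fringe (shape S))"
  by (induction S) simp_all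

fun leaf_axes :: "axis \<Rightarrow> stree \<Rightarrow> axis list" where
  "leaf_axes X SLf = [X]"
| "leaf_axes X (SNd s a b) =
    (if s then leaf_axes (next_axis X) a @ leaf_axes (next_axis (next_axis X)) b
     else leaf_axes (next_axis (next_axis X)) a @ leaf_axes (next_axis X) b)"

lemma length_leaf_axes [simp]: "length (leaf_axes X S) = num_leaves S"
  by (induction S arbitrary: X) simp_all

fun sign_prod :: "stree \<Rightarrow> real" where
  "sign_prod SLf = 1"
| "sign_prod (SNd s a b) = (if s then 1 else -1) * sign_prod a * sign_prod b"

lemma sign_prod_nonzero: "sign_prod S \<noteq> 0"
  by (induction S) simp_all

fun label_from :: "nat \<Rightarrow> stree \<Rightarrow> nat btree" where
  "label_from k SLf = Lf k"
| "label_from k (SNd s a b) = Nd (label_from k a) (label_from (k + num_leaves a) b)"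

lemma sreassoc_num_leaves: "sreassoc S S' \<Longrightarrow> num_leaves S' = num_leaves S"
  by (induction rule: sreassoc.induct) simp_all

lemma sreassoc_leaf_axes: "sreassoc S S' \<Longrightarrow> leaf_axes X S' = leaf_axes X S"
  by (induction arbitrary: X rule: sreassoc.induct) auto

lemma sreassoc_sign_prod: "sreassoc S S' \<Longrightarrow> sign_prod S' = sign_prod S"
  by (induction rule: sreassoc.induct) simp_all

lemma sreassoc_label_from: "sreassoc S S' \<Longrightarrow> reassoc (label_from k S) (label_from k S')"
  by (induction arbitrary: k rule: sreassoc.induct)
     (auto simp: add.assoc sreassoc_num_leaves intro: reassoc.intros)

lemma eval_cp_label_from:
  assumes "map v [k..<k + num_leaves S] = map axis_vec (leaf_axes X S)"
  shows "eval_cp v (label_from k S) = sign_prod S *\<^sub>R axis_vec X"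
  using assms
proof (induction S arbitrary: k X)
  case SLf
  then show ?case by simp
next
  case (SNd s a b)
  define Xa Xb where "Xa = (if s then next_axis X else next_axis (next_axis X))"
    and "Xb = (if s then next_axis (next_axis X) else next_axis X)"
  have "leaf_axes X (SNd s a b) = leaf_axes Xa a @ leaf_axes Xb b"
    by (simp add: Xa_def Xb_def)
  moreover have "[k..<k + num_leaves (SNd s a b)] =
      [k..<k + num_leaves a] @ [k + num_leaves a..<k + num_leaves a + num_leaves b]"
    using upt_add_eq_append[of k "k + num_leaves a" "num_leaves b"] by (simp add: add.assoc)
  ultimately have "map v [k..<k + num_leaves a] = map axis_vec (leaf_axes Xa a)"
    and "map v [k + num_leaves a..<k + num_leaves a + num_leaves b] = map axis_vec (leaf_axes Xb b)"
    using SNd.prems by simp_all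
  with SNd.IH have "eval_cp v (label_from k a) = sign_prod a *\<^sub>R axis_vec Xa"
    and "eval_cp v (label_from (k + num_leaves a) b) = sign_prod b *\<^sub>R axis_vec Xb"
    by blast+
  then show ?case
    by (simp add: Xa_def Xb_def cross_mult_left cross_mult_right cross3_next_axis)
qed

definition leaf_assignment :: "axis \<Rightarrow> stree \<Rightarrow> nat \<Rightarrow> real^3" where
  "leaf_assignment X S m = axis_vec (leaf_axes X S ! (m - 1))"

lemma leaf_assignment_in_basis: "leaf_assignment X S m \<in> {vi, vj, vk}"
  unfolding leaf_assignment_def by (cases "leaf_axes X S ! (m - 1)") simp_all

lemma eval_cp_leaf_assignment:
  "eval_cp (leaf_assignment X S) (label_from 1 S) = sign_prod S *\<^sub>R axis_vec X"
  by (rule eval_cp_label_from, rule nth_equalityI) (simp_all del: upt_Suc add: leaf_assignment_def)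

lemma rtranclp_sreassoc_sign_prod: "sreassoc\<^sup>*\<^sup>* S S' \<Longrightarrow> sign_prod S' = sign_prod S"
  by (induction rule: rtranclp_induct) (simp_all add: sreassoc_sign_prod)

lemma rtranclp_sreassoc_leaf_assignment:
  "sreassoc\<^sup>*\<^sup>* S S' \<Longrightarrow> leaf_assignment X S' = leaf_assignment X S"
  by (induction rule: rtranclp_induct) (simp_all add: leaf_assignment_def sreassoc_leaf_axes)

lemma fringe_map_btree: "fringe (map_btree f T) = map f (fringe T)"
  by (induction T) simp_all

lemma label_from_eq:
  assumes "fringe T = [k..<k + length (fringe T)]" and "shape S = map_btree (\<lambda>_. ()) T"
  shows "label_from k S = T"
  using assms
proof (induction T arbitrary: k S)
  case (Lf x)
  then show ?case by (cases S) simp_all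
next
  case (Nd T1 T2)
  obtain s a b where S: "S = SNd s a b" and a: "shape a = map_btree (\<lambda>_. ()) T1"
      and b: "shape b = map_btree (\<lambda>_. ()) T2"
    using Nd.prems(2) by (cases S) simp_all
  define m where "m = k + length (fringe T1)"
  have "fringe T1 @ fringe T2 = [k..<m] @ [m..<m + length (fringe T2)]"
    using Nd.prems(1) upt_add_eq_append[of k m "length (fringe T2)"] by (simp add: m_def add.assoc)
  then have "fringe T1 = [k..<k + length (fringe T1)]" and "fringe T2 = [m..<m + length (fringe T2)]"
    by (simp_all add: m_def)
  moreover have "num_leaves a = length (fringe T1)"
    using a by (simp add: num_leaves_eq_length_fringe fringe_map_btree)
  ultimately show ?case using Nd.IH a b S by (simp add: m_def)
qed

lemma rtranclp_imp_chain:
  assumes "r\<^sup>*\<^sup>* x y"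
  obtains ts where "ts \<noteq> []" "hd ts = x" "last ts = y" "\<forall>t \<in> set ts. r\<^sup>*\<^sup>* x t"
    "\<forall>i < length ts - 1. r (ts ! i) (ts ! Suc i)"
proof -
  obtain n f where f0: "f 0 = x" and fn: "f n = y" and steps: "\<forall>i < n. r (f i) (f (Suc i))"
    using rtranclp_imp_relpowp[OF assms] relpowp_fun_conv by metis
  have reach: "r\<^sup>*\<^sup>* x (f i)" if "i \<le> n" for i
    using that by (induction i) (simp_all add: f0 steps rtranclp.rtrancl_into_rtrancl)
  show thesis
    by (rule that[of "map f [0..<Suc n]"]) (auto simp del: upt_Suc simp: f0 fn steps reach hd_map last_map)
qed

theorem mainTheorem4:
  fixes n :: nat and L R :: "nat btree"
  assumes EK: EK_conjecture
    and hL: "fringe L = [1..<n+1]"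
    and hR: "fringe R = [1..<n+1]"
  shows "\<exists>v :: nat \<Rightarrow> real^3. (\<forall>m \<in> {1..n}. v m \<in> {vi, vj, vk}) \<and>
           eval_cp v L = eval_cp v R \<and> eval_cp v L \<noteq> 0 \<and>
           (\<exists>ts. ts \<noteq> [] \<and> hd ts = L \<and> last ts = R \<and>
                 (\<forall>t \<in> set ts. eval_cp v t \<noteq> 0) \<and>
                 (\<forall>i < length ts - 1. reassoc (ts ! i) (ts ! Suc i)))"
proof -
  obtain S1 S2 where S1: "shape S1 = map_btree (\<lambda>_. ()) L" and S2: "shape S2 = map_btree (\<lambda>_. ()) R"
    and moves: "sreassoc\<^sup>*\<^sup>* S1 S2"
    using EK hL hR unfolding EK_conjecture_def by (metis fringe_map_btree length_map)
  have L: "label_from 1 S1 = L" and R: "label_from 1 S2 = R"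
    using label_from_eq S1 S2 hL hR by simp_all
  define v where "v = leaf_assignment AxI S1"
  have eval: "eval_cp v (label_from 1 S) = sign_prod S1 *\<^sub>R axis_vec AxI"
    if "sreassoc\<^sup>*\<^sup>* S1 S" for S
    using eval_cp_leaf_assignment[of AxI S] rtranclp_sreassoc_leaf_assignment[OF that]
      rtranclp_sreassoc_sign_prod[OF that]
    by (simp add: v_def)
  have nonzero: "eval_cp v (label_from 1 S) \<noteq> 0" if "sreassoc\<^sup>*\<^sup>* S1 S" for S
    using eval[OF that] by (metis scaleR_eq_0_iff sign_prod_nonzero axis_vec_nonzero)
  have "\<forall>m \<in> {1..n}. v m \<in> {vi, vj, vk}"
    unfolding v_def using leaf_assignment_in_basis by blast
  moreover obtain ts where "ts \<noteq> []" "hd ts = S1" "last ts = S2" "\<forall>t \<in> set ts. sreassoc\<^sup>*\<^sup>* S1 t"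
    "\<forall>i < length ts - 1. sreassoc (ts ! i) (ts ! Suc i)"
    using rtranclp_imp_chain[OF moves] by blast
  ultimately show ?thesis
    using eval[OF rtranclp.rtrancl_refl] eval[OF moves] nonzero[OF rtranclp.rtrancl_refl] nonzero L R
    by (intro exI[of _ v] conjI exI[of _ "map (label_from 1) ts"])
      (auto simp: hd_map last_map sreassoc_label_from)
qed

end
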